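(* Let $D$ be a weighted digraph and let $\nu$ be the number of vertices of a longest directed path in $D$. If $\nu$ is odd, then $\mathrm{mac}(D)\ge\left(\frac14+\frac{1}{4\nu}\right)w(D)$; if $\nu$ is even, then $\mathrm{mac}(D)\ge\left(\frac14+\frac{1}{4(\nu-1)}\right)w(D)$.
   Context: A weighted digraph $D=(V,A,w)$ is a digraph without loops or parallel arcs (opposite arcs allowed) with weights $w:A\to\mathbb{R}_{\ge0}$; $w(D)$ is the total arc weight. For a partition $(X,Y)$ of $V$, $w(X,Y)$ is the total weight of arcs from $X$ to $Y$, and $\mathrm{mac}(D)=\max_{(X,Y)}w(X,Y)$ over all partitions. *)

theory Defs
  imports Complex_Main
begin

text \<open>A weighted digraph is given by a finite vertex set V, an arc set A \<subseteq> V \<times> V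
  without loops (A is a set of ordered pairs, so there are no parallel arcs, while
  opposite arcs are allowed), and a nonnegative weight function w on arcs.\<close>

definition weighted_digraph :: "'a set \<Rightarrow> ('a \<times> 'a) set \<Rightarrow> ('a \<times> 'a \<Rightarrow> real) \<Rightarrow> bool" where
  "weighted_digraph V A w \<longleftrightarrow> finite V \<and> A \<subseteq> V \<times> V \<and> (\<forall>v. (v, v) \<notin> A)
     \<and> (\<forall>a\<in>A. w a \<ge> 0)"

definition total_weight :: "('a \<times> 'a) set \<Rightarrow> ('a \<times> 'a \<Rightarrow> real) \<Rightarrow> real" where
  "total_weight A w = (\<Sum>a\<in>A. w a)"

definition cut_weight :: "('a \<times> 'a) set \<Rightarrow> ('a \<times> 'a \<Rightarrow> real) \<Rightarrow> 'a set \<Rightarrow> 'a set \<Rightarrow> real" where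
  "cut_weight A w X Y = (\<Sum>a\<in>{(x, y)\<in>A. x \<in> X \<and> y \<in> Y}. w a)"

definition mac :: "'a set \<Rightarrow> ('a \<times> 'a) set \<Rightarrow> ('a \<times> 'a \<Rightarrow> real) \<Rightarrow> real" where
  "mac V A w = Max ((\<lambda>X. cut_weight A w X (V - X)) ` Pow V)"

definition dipath :: "'a set \<Rightarrow> ('a \<times> 'a) set \<Rightarrow> 'a list \<Rightarrow> bool" where
  "dipath V A p \<longleftrightarrow> p \<noteq> [] \<and> distinct p \<and> set p \<subseteq> V
     \<and> (\<forall>i. Suc i < length p \<longrightarrow> (p ! i, p ! Suc i) \<in> A)"

definition longest_path_order :: "'a set \<Rightarrow> ('a \<times> 'a) set \<Rightarrow> nat" where
  "longest_path_order V A = Max (length ` {p. dipath V A p})"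

end

theory Submission
  imports Defs
begin

text \<open>Colour the vertices properly with \<open>\<nu>\<close> colours (Gallai--Roy: take a maximal acyclic
  subdigraph and colour each vertex by the number of vertices of a longest path of it ending
  there). For an \<open>s\<close>-subset \<open>S\<close> of the colours chosen uniformly at random, put the vertices
  coloured in \<open>S\<close> on the left; an arc joins two different colour classes, so it goes from left
  to right with probability \<open>s(\<nu>-s)/(\<nu>(\<nu>-1))\<close>. Some cut therefore carries at least that
  fraction of \<open>w(D)\<close>, and \<open>s = \<lfloor>\<nu>/2\<rfloor>\<close> gives the two bounds.\<close>

lemma card_subsets_containing_not_containing:
  assumes "finite K" "a \<in> K" "b \<in> K" "a \<noteq> b" "1 \<le> s"
  shows "card {S. S \<subseteq> K \<and> card S = s \<and> a \<in> S \<and> b \<notin> S} = (card K - 2) choose (s - 1)"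
proof -
  let ?T = "{T. T \<subseteq> K - {a, b} \<and> card T = s - 1}"
  have "{S. S \<subseteq> K \<and> card S = s \<and> a \<in> S \<and> b \<notin> S} = insert a ` ?T"
  proof (intro equalityI subsetI)
    fix S assume S: "S \<in> {S. S \<subseteq> K \<and> card S = s \<and> a \<in> S \<and> b \<notin> S}"
    then have "finite S" using assms(1) finite_subset by blast
    with S have "S - {a} \<in> ?T" and "S = insert a (S - {a})" by auto
    then show "S \<in> insert a ` ?T" by blast
  next
    fix S assume "S \<in> insert a ` ?T"
    then obtain T where T: "T \<in> ?T" "S = insert a T" by blast
    then have "finite T" "a \<notin> T" using assms(1) finite_subset by auto
    then show "S \<in> {S. S \<subseteq> K \<and> card S = s \<and> a \<in> S \<and> b \<notin> S}" using T assms by auto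
  qed
  moreover have "inj_on (insert a) ?T"
    by (rule inj_onI) (auto simp: insert_ident)
  moreover have "card (K - {a, b}) = card K - 2" using assms by (simp add: card_Diff_subset)
  ultimately show ?thesis using assms(1) by (simp add: card_image n_subsets)
qed

lemma sum_subsets_separating:
  fixes w :: "'b \<Rightarrow> 'r::comm_semiring_1"
  assumes "finite E" "finite K" "1 \<le> s"
    and "\<And>e. e \<in> E \<Longrightarrow> f e \<in> K \<and> g e \<in> K \<and> f e \<noteq> g e"
  shows "(\<Sum>S\<in>{S. S \<subseteq> K \<and> card S = s}. \<Sum>e\<in>E. if f e \<in> S \<and> g e \<notin> S then w e else 0)
       = of_nat ((card K - 2) choose (s - 1)) * (\<Sum>e\<in>E. w e)"
proof -
  let ?S = "{S. S \<subseteq> K \<and> card S = s}"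
  have "finite ?S" using assms(2) by simp
  have "(\<Sum>S\<in>?S. if f e \<in> S \<and> g e \<notin> S then w e else 0)
      = of_nat ((card K - 2) choose (s - 1)) * w e" if e: "e \<in> E" for e
  proof -
    have "{S \<in> ?S. f e \<in> S \<and> g e \<notin> S} = {S. S \<subseteq> K \<and> card S = s \<and> f e \<in> S \<and> g e \<notin> S}"
      by auto
    then have "card {S \<in> ?S. f e \<in> S \<and> g e \<notin> S} = (card K - 2) choose (s - 1)"
      using card_subsets_containing_not_containing[OF assms(2) _ _ _ assms(3)] assms(4)[OF e] by simp
    then show ?thesis by (simp add: sum.inter_filter[OF \<open>finite ?S\<close>, symmetric] mult.commute)
  qed
  then have "(\<Sum>e\<in>E. \<Sum>S\<in>?S. if f e \<in> S \<and> g e \<notin> S then w e else 0)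
      = (\<Sum>e\<in>E. of_nat ((card K - 2) choose (s - 1)) * w e)"
    by (rule sum.cong[OF refl])
  then show ?thesis by (simp only: sum.swap[of _ ?S] sum_distrib_left)
qed

lemma choose_diff_two_mult:
  assumes "1 \<le> s" "s < k"
  shows "((k - 2) choose (s - 1)) * k * (k - 1) = (k choose s) * s * (k - s)"
proof -
  define m t where "m = k - 2" and "t = s - 1"
  have k: "k = Suc (Suc m)" and s: "s = Suc t" using assms by (auto simp: m_def t_def)
  have "(k choose s) * s * (k - s) = (Suc t * (Suc (Suc m) choose Suc t)) * (Suc m - t)"
    by (simp only: k s diff_Suc_Suc mult.commute)
  also have "\<dots> = k * ((Suc m - t) * (Suc m choose t))"
    by (simp only: Suc_times_binomial k ac_simps)
  also have "\<dots> = k * (Suc m * (m choose t))"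
    by (simp only: binomial_absorb_comp diff_Suc_1)
  finally have "(k choose s) * s * (k - s) = k * (Suc m * (m choose t))" .
  moreover have "k - 2 = m" "s - 1 = t" "k - 1 = Suc m" using k s by simp_all
  ultimately show ?thesis by (simp only: ac_simps)
qed

lemma finite_dipaths: "finite V \<Longrightarrow> finite {p. dipath V A p}"
  by (rule finite_subset[OF _ finite_subset_distinct[of V]]) (auto simp: dipath_def)

lemma dipath_mono: "dipath V B p \<Longrightarrow> B \<subseteq> A \<Longrightarrow> dipath V A p"
  unfolding dipath_def by blast

lemma dipath_singleton: "v \<in> V \<Longrightarrow> dipath V A [v]"
  by (simp add: dipath_def)

lemma dipath_snoc:
  assumes "dipath V A p" "y \<in> V" "y \<notin> set p" "(last p, y) \<in> A"
  shows "dipath V A (p @ [y])"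
  using assms unfolding dipath_def
  by (auto simp: nth_append last_conv_nth less_Suc_eq) (metis diff_Suc_Suc minus_nat.diff_0)

lemma dipath_rtrancl:
  assumes "dipath V A p" "i \<le> j" "j < length p"
  shows "(p ! i, p ! j) \<in> A\<^sup>*"
  using assms(2,3)
proof (induction j)
  case (Suc j)
  then have "(p ! j, p ! Suc j) \<in> A" using assms(1) by (simp add: dipath_def)
  with Suc show ?case by (cases "i = Suc j") (auto intro: rtrancl_into_rtrancl)
qed simp

lemma acyclic_dipath_successor_notin:
  assumes "acyclic A" "dipath V A p" "(last p, y) \<in> A"
  shows "y \<notin> set p"
proof
  assume "y \<in> set p"
  then obtain i where i: "i < length p" "p ! i = y" by (meson in_set_conv_nth)
  have "last p = p ! (length p - 1)" using assms(2) by (simp add: dipath_def last_conv_nth)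
  then have "(y, last p) \<in> A\<^sup>*" using dipath_rtrancl[OF assms(2), of i "length p - 1"] i by simp
  with assms(3) have "(y, y) \<in> A\<^sup>+" by simp
  with assms(1) show False by (simp add: acyclic_def)
qed

definition longest_dipath_to :: "'a set \<Rightarrow> ('a \<times> 'a) set \<Rightarrow> 'a \<Rightarrow> nat" where
  "longest_dipath_to V A v = Max (length ` {p. dipath V A p \<and> last p = v})"

lemma length_le_longest_dipath_to:
  "finite V \<Longrightarrow> dipath V A p \<Longrightarrow> length p \<le> longest_dipath_to V A (last p)"
  unfolding longest_dipath_to_def
  by (rule Max_ge) (auto intro: finite_subset[OF _ finite_dipaths])

lemma longest_dipath_to_attained:
  assumes "finite V" "v \<in> V"
  obtains p where "dipath V A p" "last p = v" "length p = longest_dipath_to V A v"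
proof -
  have "finite {p. dipath V A p \<and> last p = v}"
    using assms(1) by (auto intro: finite_subset[OF _ finite_dipaths])
  moreover have "[v] \<in> {p. dipath V A p \<and> last p = v}"
    using assms(2) by (simp add: dipath_singleton)
  ultimately have "longest_dipath_to V A v \<in> length ` {p. dipath V A p \<and> last p = v}"
    unfolding longest_dipath_to_def by (intro Max_in) auto
  then show ?thesis using that by auto
qed

lemma longest_dipath_to_bounds:
  assumes "finite V" "B \<subseteq> A" "v \<in> V"
  shows "1 \<le> longest_dipath_to V B v" "longest_dipath_to V B v \<le> longest_path_order V A"
proof -
  show "1 \<le> longest_dipath_to V B v"
    using length_le_longest_dipath_to[OF assms(1) dipath_singleton[OF assms(3)]] by simp
  obtain p where "dipath V B p" "length p = longest_dipath_to V B v"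
    using longest_dipath_to_attained assms(1,3) by metis
  with assms(1,2) show "longest_dipath_to V B v \<le> longest_path_order V A"
    unfolding longest_path_order_def by (metis Max_ge dipath_mono finite_dipaths finite_imageI
        image_eqI mem_Collect_eq)
qed

lemma longest_dipath_to_less:
  assumes "finite V" "B \<subseteq> V \<times> V" "acyclic B" "(x, y) \<in> B"
  shows "longest_dipath_to V B x < longest_dipath_to V B y"
proof -
  have "x \<in> V" "y \<in> V" using assms(2,4) by auto
  then obtain p where p: "dipath V B p" "last p = x" "length p = longest_dipath_to V B x"
    using longest_dipath_to_attained assms(1) by metis
  then have "dipath V B (p @ [y])"
    using assms(3,4) \<open>y \<in> V\<close> by (metis dipath_snoc acyclic_dipath_successor_notin)
  from length_le_longest_dipath_to[OF assms(1) this] p show ?thesis by simp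
qed

lemma longest_dipath_to_strict_mono:
  assumes "finite V" "B \<subseteq> V \<times> V" "acyclic B" "(x, y) \<in> B\<^sup>+"
  shows "longest_dipath_to V B x < longest_dipath_to V B y"
  using assms(4)
  by (induction rule: trancl_induct) (use longest_dipath_to_less[OF assms(1-3)] less_trans in blast)+

lemma maximal_acyclic_subset:
  assumes "finite A" "\<forall>v. (v, v) \<notin> A"
  obtains B where "B \<subseteq> A" "acyclic B" "\<forall>(u, v)\<in>A. (u, v) \<in> B\<^sup>+ \<or> (v, u) \<in> B\<^sup>+"
proof -
  have "{} \<in> {B. B \<subseteq> A \<and> acyclic B}" by (simp add: acyclic_def)
  with assms(1) have "\<exists>B\<in>{B. B \<subseteq> A \<and> acyclic B}.
      \<forall>B'\<in>{B. B \<subseteq> A \<and> acyclic B}. B \<subseteq> B' \<longrightarrow> B = B'"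
    by (intro finite_has_maximal) auto
  then obtain B where B: "B \<subseteq> A" "acyclic B"
    and max: "\<And>B'. B' \<subseteq> A \<Longrightarrow> acyclic B' \<Longrightarrow> B \<subseteq> B' \<Longrightarrow> B = B'"
    by auto
  have "(u, v) \<in> B\<^sup>+ \<or> (v, u) \<in> B\<^sup>+" if uv: "(u, v) \<in> A" for u v
  proof (cases "(u, v) \<in> B")
    case False
    then have "\<not> acyclic (insert (u, v) B)" using max[of "insert (u, v) B"] B uv by blast
    then have "(v, u) \<in> B\<^sup>*" using B(2) by simp
    moreover have "u \<noteq> v" using assms(2) uv by auto
    ultimately show ?thesis by (auto simp: rtrancl_eq_or_trancl)
  qed auto
  with B that show ?thesis by blast
qed

theorem gallai_roy_colouring:
  assumes "finite V" "A \<subseteq> V \<times> V" "\<forall>v. (v, v) \<notin> A"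
  obtains c where "\<forall>v\<in>V. c v \<in> {1..longest_path_order V A}" "\<forall>(u, v)\<in>A. c u \<noteq> c v"
proof -
  have "finite A" using assms(1,2) finite_subset by blast
  then obtain B where B: "B \<subseteq> A" "acyclic B" "\<forall>(u, v)\<in>A. (u, v) \<in> B\<^sup>+ \<or> (v, u) \<in> B\<^sup>+"
    using maximal_acyclic_subset assms(3) by blast
  have "B \<subseteq> V \<times> V" using B(1) assms(2) by blast
  then have "\<forall>(u, v)\<in>A. longest_dipath_to V B u \<noteq> longest_dipath_to V B v"
    using B(3) longest_dipath_to_strict_mono[OF assms(1) _ B(2)] by fastforce
  moreover have "\<forall>v\<in>V. longest_dipath_to V B v \<in> {1..longest_path_order V A}"
    using longest_dipath_to_bounds[OF assms(1) B(1)] by auto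
  ultimately show ?thesis using that by blast
qed

lemma cut_weight_le_mac:
  assumes "weighted_digraph V A w" "X \<subseteq> V"
  shows "cut_weight A w X (V - X) \<le> mac V A w"
  using assms unfolding mac_def weighted_digraph_def by (intro Max_ge) auto

lemma mac_nonneg:
  assumes "weighted_digraph V A w"
  shows "0 \<le> mac V A w"
proof -
  have "0 \<le> cut_weight A w {} (V - {})"
    using assms unfolding cut_weight_def weighted_digraph_def by (intro sum_nonneg) auto
  then show ?thesis using cut_weight_le_mac[OF assms, of "{}"] by simp
qed

lemma cut_weight_colour_classes:
  assumes "A \<subseteq> V \<times> V" "finite A"
  shows "cut_weight A w {v \<in> V. c v \<in> S} (V - {v \<in> V. c v \<in> S})
       = (\<Sum>e\<in>A. if c (fst e) \<in> S \<and> c (snd e) \<notin> S then w e else 0)"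
proof -
  have "{(x, y) \<in> A. x \<in> {v \<in> V. c v \<in> S} \<and> y \<in> V - {v \<in> V. c v \<in> S}}
      = {e \<in> A. c (fst e) \<in> S \<and> c (snd e) \<notin> S}" using assms(1) by auto
  then show ?thesis unfolding cut_weight_def by (simp only: sum.inter_filter[OF assms(2)])
qed

theorem mac_ge_proper_colouring:
  assumes wd: "weighted_digraph V A w"
    and c: "\<forall>v\<in>V. c v \<in> {1..k}" "\<forall>(u, v)\<in>A. c u \<noteq> c v"
    and s: "1 \<le> s" "s < k"
  shows "real s * real (k - s) / (real k * real (k - 1)) * total_weight A w \<le> mac V A w"
proof -
  have AV: "A \<subseteq> V \<times> V" and "finite A"
    using wd finite_subset unfolding weighted_digraph_def by auto
  let ?S = "{S. S \<subseteq> {1..k} \<and> card S = s}"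
  define a b where "a = real ((k - 2) choose (s - 1))" and "b = real (k choose s)"
  have "a * total_weight A w
      = (\<Sum>S\<in>?S. \<Sum>e\<in>A. if c (fst e) \<in> S \<and> c (snd e) \<notin> S then w e else 0)"
    using sum_subsets_separating[OF \<open>finite A\<close>, of "{1..k}" s "\<lambda>e. c (fst e)" "\<lambda>e. c (snd e)" w]
      s(1) c AV unfolding total_weight_def a_def by fastforce
  also have "\<dots> \<le> real (card ?S) * mac V A w"
  proof (rule sum_bounded_above)
    fix S
    show "(\<Sum>e\<in>A. if c (fst e) \<in> S \<and> c (snd e) \<notin> S then w e else 0) \<le> mac V A w"
      using cut_weight_le_mac[OF wd, of "{v \<in> V. c v \<in> S}"]
        cut_weight_colour_classes[OF AV \<open>finite A\<close>, of w c S] by simp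
  qed
  also have "card ?S = k choose s" by (simp add: n_subsets)
  finally have "a * total_weight A w \<le> b * mac V A w" unfolding b_def .
  moreover have "real s * real (k - s) / (real k * real (k - 1)) = a / b"
  proof -
    have "a * (real k * real (k - 1)) = b * (real s * real (k - s))"
      using choose_diff_two_mult[OF s] unfolding a_def b_def by (metis mult.assoc of_nat_mult)
    moreover have "real k * real (k - 1) \<noteq> 0" "b \<noteq> 0" using s by (auto simp: b_def)
    ultimately show ?thesis by (metis frac_eq_eq mult.commute)
  qed
  moreover have "0 < b" using s by (simp add: b_def)
  ultimately show ?thesis by (simp add: pos_divide_le_eq mult.commute)
qed

lemma balanced_cut_fraction_odd:
  fixes x :: real
  assumes "0 < x"
  shows "x * (x + 1) / ((2 * x + 1) * (2 * x)) = 1/4 + 1 / (4 * (2 * x + 1))"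
proof -
  have "(2 * x + 1) * (2 * x) = x * (2 * (2 * x + 1))" by (simp add: algebra_simps)
  then have "x * (x + 1) / ((2 * x + 1) * (2 * x)) = (x + 1) / (2 * (2 * x + 1))"
    using assms by simp
  also have "\<dots> = 1/4 + 1 / (4 * (2 * x + 1))"
    using assms by (simp add: field_simps)
  finally show ?thesis .
qed

lemma balanced_cut_fraction_even:
  fixes x :: real
  assumes "1 \<le> x"
  shows "x * x / (2 * x * (2 * x - 1)) = 1/4 + 1 / (4 * (2 * x - 1))"
  using assms by (simp add: field_split_simps)

theorem mac_ge_proper_colouring_balanced:
  assumes wd: "weighted_digraph V A w"
    and c: "\<forall>v\<in>V. c v \<in> {1..k}" "\<forall>(u, v)\<in>A. c u \<noteq> c v"
    and "1 \<le> k"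
  shows "(odd k \<longrightarrow> mac V A w \<ge> (1/4 + 1 / (4 * real k)) * total_weight A w)
       \<and> (even k \<longrightarrow> mac V A w \<ge> (1/4 + 1 / (4 * (real k - 1))) * total_weight A w)"
proof -
  have AV: "A \<subseteq> V \<times> V" using wd unfolding weighted_digraph_def by auto
  note bound = mac_ge_proper_colouring[OF wd c]
  show ?thesis
  proof (intro conjI impI)
    assume "odd k"
    then obtain m where m: "k = 2 * m + 1" by (metis oddE)
    show "(1/4 + 1 / (4 * real k)) * total_weight A w \<le> mac V A w"
    proof (cases "m = 0")
      case True
      then have "A = {}" using c AV m by fastforce
      then show ?thesis using mac_nonneg[OF wd] by (simp add: total_weight_def)
    next
      case False
      have "real k = 2 * real m + 1" "real (k - m) = real m + 1" "real (k - 1) = 2 * real m"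
        using m by auto
      then have "real m * real (k - m) / (real k * real (k - 1)) = 1/4 + 1 / (4 * real k)"
        using balanced_cut_fraction_odd[of "real m"] False by simp
      moreover have "real m * real (k - m) / (real k * real (k - 1)) * total_weight A w \<le> mac V A w"
        by (rule bound) (use False m in auto)
      ultimately show ?thesis by (simp only:)
    qed
  next
    assume "even k"
    then obtain m where m: "k = 2 * m" by (metis evenE)
    with \<open>1 \<le> k\<close> have "1 \<le> m" "real k = 2 * real m" "real (k - m) = real m"
        "real (k - 1) = 2 * real m - 1"
      by (auto simp: of_nat_diff)
    then have "real m * real (k - m) / (real k * real (k - 1)) = 1/4 + 1 / (4 * (real k - 1))"
      using balanced_cut_fraction_even[of "real m"] by simp
    moreover have "real m * real (k - m) / (real k * real (k - 1)) * total_weight A w \<le> mac V A w"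
      by (rule bound) (use \<open>1 \<le> m\<close> m in auto)
    ultimately show "(1/4 + 1 / (4 * (real k - 1))) * total_weight A w \<le> mac V A w"
      by (simp only:)
  qed
qed

theorem mainTheorem3:
  fixes V :: "'a set" and A :: "('a \<times> 'a) set" and w :: "'a \<times> 'a \<Rightarrow> real"
  assumes "weighted_digraph V A w" and "V \<noteq> {}"
  defines "\<nu> \<equiv> longest_path_order V A"
  shows "(odd \<nu> \<longrightarrow> mac V A w \<ge> (1/4 + 1 / (4 * real \<nu>)) * total_weight A w)
       \<and> (even \<nu> \<longrightarrow> mac V A w \<ge> (1/4 + 1 / (4 * (real \<nu> - 1))) * total_weight A w)"
proof -
  have fV: "finite V" and AV: "A \<subseteq> V \<times> V" and irr: "\<forall>v. (v, v) \<notin> A"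
    using assms(1) unfolding weighted_digraph_def by auto
  obtain c where c: "\<forall>v\<in>V. c v \<in> {1..\<nu>}" "\<forall>(u, v)\<in>A. c u \<noteq> c v"
    using gallai_roy_colouring[OF fV AV irr] unfolding \<nu>_def by blast
  obtain v where "v \<in> V" using assms(2) by blast
  then have "1 \<le> \<nu>"
    using longest_dipath_to_bounds[OF fV subset_refl, of v A] unfolding \<nu>_def by linarith
  with mac_ge_proper_colouring_balanced[OF assms(1) c] show ?thesis by blast
qed

end
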